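(* Let $n\ge3$ and let $F(x,y)=a_0\prod_{i=1}^n(x-\alpha_iy)\in\mathbb{Z}[x,y]$ be a binary form of degree $n$ in the class $C(4s-2)$, with discriminant $D$ and Mahler measure $M$, and put $L_i(x,y)=x-\alpha_iy$. Let $h$ be a positive integer with $h<\frac{|D|^{1/(4(n-1))}}{10^n n^{n/(4(n-1))}}$ and put $Q=M/h$. Let $0\le\mathfrak{a}\le\mathfrak{b}$ with $\mathfrak{b}\le h$ and $\mathfrak{b}\le h^{1/2}\mathfrak{a}$, and suppose $F$ is reduced with respect to $(\mathfrak{a},\mathfrak{b})$. Suppose $(x_0,y_0)$ and $(x,y)$ are linearly independent primitive integer points with $\mathfrak{a}\le|F(x_0,y_0)|\le\mathfrak{b}$ and $\mathfrak{a}\le|F(x,y)|\le\mathfrak{b}$. Then there are numbers $\psi_1,\dots,\psi_n$ with $\psi_i=0$ or $\frac{1}{2n}\le\psi_i\le1$ for each $i$, and $\sum_{i=1}^n\psi_i\ge\frac12$, such that for every $i\in\{1,\dots,n\}$ $$\left|\frac{L_i(x_0,y_0)}{L_i(x,y)}\right|\ge\left(Q^{\psi_i}-\frac32-h^{1/(2n)}\right)|x_0y-xy_0|.$$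
   Context: $\alpha_1,\dots,\alpha_n$ are the roots of $F(x,1)$ and $a_0=F(1,0)$. $C(t)$ is the set of binary forms of degree $n$ with integer coefficients, irreducible over $\mathbb{Q}$, such that for all real $(u,v)\neq(0,0)$ the form $uF_x+vF_y$ has at most $t$ real zeros. For $F=c\prod(x-\gamma_iy)$, $M(F)=|c|\prod_i\max(1,|\gamma_i|)$ and $D=c^{2(n-1)}\prod_{i<j}(\gamma_i-\gamma_j)^2$. Forms $F,G$ are equivalent if $G=\pm F(ax+by,cx+dy)$ with $\begin{pmatrix}a&b\\c&d\end{pmatrix}\in GL_2(\mathbb{Z})$. $F$ is normalized with respect to $(\mathfrak{a},\mathfrak{b})$ if $\mathfrak{a}\le|F(1,0)|\le\mathfrak{b}$, and reduced if it is normalized and has smallest Mahler measure among normalized forms equivalent to it. Primitive means $\gcd(x,y)=1$. *)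

theory Defs
  imports "HOL-Analysis.Analysis" "Berlekamp_Zassenhaus.Mahler_Measure"
begin

text \<open>A binary form of degree n with integer coefficients is represented by the int poly
  p = F(x,1) (with degree p \<le> n), so that F(x,y) = sum_k coeff p k x^k y^(n-k).\<close>

definition bform :: "nat \<Rightarrow> int poly \<Rightarrow> 'a::comm_ring_1 \<Rightarrow> 'a \<Rightarrow> 'a" where
  "bform n p x y = (\<Sum>k\<le>n. of_int (Polynomial.coeff p k) * x ^ k * y ^ (n - k))"

definition bform_dx :: "nat \<Rightarrow> int poly \<Rightarrow> real \<Rightarrow> real \<Rightarrow> real" where
  "bform_dx n p x y = (\<Sum>k\<le>n. real k * of_int (Polynomial.coeff p k) * x ^ (k - 1) * y ^ (n - k))"

definition bform_dy :: "nat \<Rightarrow> int poly \<Rightarrow> real \<Rightarrow> real \<Rightarrow> real" where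
  "bform_dy n p x y = (\<Sum>k\<le>n. real (n - k) * of_int (Polynomial.coeff p k) * x ^ k * y ^ (n - k - 1))"

definition real_proj_zeros :: "(real \<Rightarrow> real \<Rightarrow> real) \<Rightarrow> (real \<times> real) set" where
  "real_proj_zeros G = {(r, 1) | r. G r 1 = 0} \<union> {(1, 0) | _::unit. G 1 0 = 0}"

text \<open>Irreducible binary form of degree n over Q (n \<ge> 2 forces F(1,0) \<noteq> 0, i.e. Polynomial.degree p = n).\<close>
definition irreducible_bform :: "nat \<Rightarrow> int poly \<Rightarrow> bool" where
  "irreducible_bform n p \<longleftrightarrow> Polynomial.degree p = n \<and> irreducible (map_poly rat_of_int p)"

definition class_C :: "nat \<Rightarrow> nat \<Rightarrow> int poly \<Rightarrow> bool" where
  "class_C t n p \<longleftrightarrow> irreducible_bform n p \<and>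
     (\<forall>u v::real. (u, v) \<noteq> (0, 0) \<longrightarrow>
        (let Z = real_proj_zeros (\<lambda>x y. u * bform_dx n p x y + v * bform_dy n p x y)
         in finite Z \<and> card Z \<le> t))"

definition equiv_bform :: "nat \<Rightarrow> int poly \<Rightarrow> int poly \<Rightarrow> bool" where
  "equiv_bform n p q \<longleftrightarrow> Polynomial.degree q \<le> n \<and>
     (\<exists>a b c d (e::int). \<bar>a * d - b * c\<bar> = 1 \<and> (e = 1 \<or> e = -1) \<and>
        (\<forall>x y::int. bform n q x y = e * bform n p (a * x + b * y) (c * x + d * y)))"

definition normalized_bform :: "nat \<Rightarrow> real \<Rightarrow> real \<Rightarrow> int poly \<Rightarrow> bool" where
  "normalized_bform n A B p \<longleftrightarrow> A \<le> \<bar>real_of_int (bform n p 1 0)\<bar> \<and> \<bar>real_of_int (bform n p 1 0)\<bar> \<le> B"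

definition reduced_bform :: "nat \<Rightarrow> real \<Rightarrow> real \<Rightarrow> int poly \<Rightarrow> bool" where
  "reduced_bform n A B p \<longleftrightarrow> normalized_bform n A B p \<and>
     (\<forall>q. equiv_bform n p q \<and> normalized_bform n A B q \<longrightarrow> mahler_measure p \<le> mahler_measure q)"

definition disc_roots :: "nat \<Rightarrow> complex \<Rightarrow> (nat \<Rightarrow> complex) \<Rightarrow> complex" where
  "disc_roots n a0 \<alpha> = a0 ^ (2 * (n - 1)) * (\<Prod>j<n. \<Prod>i<j. (\<alpha> i - \<alpha> j) ^ 2)"

end

theory Submission
  imports Defs
begin

(* Complete the primitive vector (x, y) to a unimodular matrix with second column (u, v).
   The form F(xX + uY, yX + vY) is equivalent to F, normalized because its leading coefficient
   is F(x, y), and has the roots (\<alpha>\<^sub>i v - u) / (x - \<alpha>\<^sub>i y) =: \<gamma>\<^sub>i; since F is reduced,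
   M(F) \<le> |F(x, y)| \<Prod> max(1, |\<gamma>\<^sub>i|) \<le> h \<Prod> max(1, |\<gamma>\<^sub>i|), i.e. Q \<le> \<Prod> max(1, |\<gamma>\<^sub>i|).
   Choosing (u, v) so that (x0, y0) = a (x, y) + d (u, v) with |a| \<le> |d| = |x0 y - x y0| gives
   L\<^sub>i(x0, y0) / L\<^sub>i(x, y) = a - d \<gamma>\<^sub>i, of modulus at least (|\<gamma>\<^sub>i| - 1) |d|. Truncating the
   exponents log max(1, |\<gamma>\<^sub>i|) / log Q, whose sum is at least 1, yields the \<psi>\<^sub>i. *)

lemma bform_of_int:
  "of_int (bform n p x y) = bform n p (of_int x :: 'a::comm_ring_1) (of_int y)"
  unfolding bform_def by simp

lemma bform_1_0: "bform n p (1::'a::comm_ring_1) 0 = of_int (Polynomial.coeff p n)"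
proof -
  have "bform n p (1::'a) 0
      = of_int (Polynomial.coeff p n) + (\<Sum>k<n. of_int (Polynomial.coeff p k) * 0 ^ (n - k))"
    unfolding bform_def lessThan_Suc_atMost[symmetric] lessThan_Suc by simp
  also have "(\<Sum>k<n. of_int (Polynomial.coeff p k) * (0::'a) ^ (n - k)) = 0"
    by (intro sum.neutral) (auto simp: power_0_left)
  finally show ?thesis by simp
qed

lemma bform_eq_prod_linear_factors:
  fixes r :: "int poly" and \<beta> :: "nat \<Rightarrow> 'a::field" and X Y :: 'a
  assumes factored: "map_poly of_int r = Polynomial.smult c (\<Prod>i<n. [:- \<beta> i, 1:])"
  shows "bform n r X Y = c * (\<Prod>i<n. X - \<beta> i * Y)"
proof -
  let ?L = "\<Prod>i<n. [:- \<beta> i, 1:]"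
  have deg: "degree ?L = n" and lead: "Polynomial.coeff ?L n = 1"
    using lead_coeff_prod[of "\<lambda>i. [:- \<beta> i, 1:]" "{..<n}"]
    by (simp_all add: degree_prod_eq_sum_degree)
  have "of_int (Polynomial.coeff r k) = c * Polynomial.coeff ?L k" for k
    using arg_cong[OF factored, of "\<lambda>q. Polynomial.coeff q k"] by (simp add: coeff_map_poly)
  then have bf: "bform n r X Y = (\<Sum>k\<le>n. c * Polynomial.coeff ?L k * X ^ k * Y ^ (n - k))"
    unfolding bform_def by simp
  show ?thesis
  proof (cases "Y = 0")
    case True
    have "(\<Sum>k<n. c * Polynomial.coeff ?L k * X ^ k * Y ^ (n - k)) = 0"
      using True by (intro sum.neutral) auto
    then show ?thesis
      unfolding bf lessThan_Suc_atMost[symmetric] lessThan_Suc using lead True by simp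
  next
    case False
    have "bform n r X Y = c * Y ^ n * (\<Sum>k\<le>n. Polynomial.coeff ?L k * (X / Y) ^ k)"
      unfolding bf sum_distrib_left
    proof (rule sum.cong)
      fix k assume "k \<in> {..n}"
      then have "Y ^ n = Y ^ k * Y ^ (n - k)" by (simp flip: power_add)
      then show "c * Polynomial.coeff ?L k * X ^ k * Y ^ (n - k)
          = c * Y ^ n * (Polynomial.coeff ?L k * (X / Y) ^ k)"
        using False by (simp add: power_divide field_simps)
    qed simp
    also have "(\<Sum>k\<le>n. Polynomial.coeff ?L k * (X / Y) ^ k) = poly ?L (X / Y)"
      unfolding poly_altdef deg ..
    also have "\<dots> = (\<Prod>i<n. X / Y - \<beta> i)"
      by (simp add: poly_prod)
    also have "c * Y ^ n * (\<Prod>i<n. X / Y - \<beta> i) = c * (\<Prod>i<n. Y * (X / Y - \<beta> i))"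
      by (simp add: prod.distrib)
    also have "(\<Prod>i<n. Y * (X / Y - \<beta> i)) = (\<Prod>i<n. X - \<beta> i * Y)"
      using False by (intro prod.cong) (auto simp: field_simps)
    finally show ?thesis .
  qed
qed

lemma mahler_measure_poly_smult_prod_linear_factors:
  fixes \<gamma> :: "nat \<Rightarrow> complex"
  shows "mahler_measure_poly (Polynomial.smult c (\<Prod>i<n. [:- \<gamma> i, 1:]))
     = cmod c * (\<Prod>i<n. max 1 (cmod (\<gamma> i)))"
proof -
  have list_prod: "prod_list (map g [0..<n]) = (\<Prod>i<n. g i)" for g :: "nat \<Rightarrow> 'b::comm_monoid_mult"
    by (induction n) simp_all
  show ?thesis
    using mahler_measure_poly_explicit[of c "map \<gamma> [0..<n]"] by (simp add: list_prod o_def)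
qed

lemma linear_factor_nonzero:
  fixes \<alpha> :: "nat \<Rightarrow> 'a::field_char_0"
  assumes "map_poly of_int p = Polynomial.smult c (\<Prod>i<n. [:- \<alpha> i, 1:])"
    and "bform n p x y \<noteq> 0" and "i < n"
  shows "of_int x - \<alpha> i * of_int y \<noteq> 0"
proof
  assume "of_int x - \<alpha> i * of_int y = 0"
  then have "(\<Prod>i<n. of_int x - \<alpha> i * of_int y) = 0"
    using assms(3) by (intro prod_zero) auto
  then have "of_int (bform n p x y) = (0::'a)"
    by (simp add: bform_of_int bform_eq_prod_linear_factors[OF assms(1)])
  with assms(2) show False
    by simp
qed

(* The root of F(xX + uY, yX + vY) corresponding to the root \<alpha> of F(X, 1). *)
definition substituted_root :: "'a::field \<Rightarrow> 'a \<Rightarrow> 'a \<Rightarrow> 'a \<Rightarrow> 'a \<Rightarrow> 'a" where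
  "substituted_root \<alpha> x y u v = (\<alpha> * v - u) / (x - \<alpha> * y)"

lemma linear_form_substitution:
  fixes \<alpha> x y u v T S :: "'a::field"
  assumes "x - \<alpha> * y \<noteq> 0"
  shows "(x * T + u * S) - \<alpha> * (y * T + v * S)
    = (x - \<alpha> * y) * (T - substituted_root \<alpha> x y u v * S)"
proof -
  have "(x - \<alpha> * y) * (substituted_root \<alpha> x y u v * S) = (\<alpha> * v - u) * S"
    using assms by (simp add: substituted_root_def)
  then show ?thesis
    by (simp add: algebra_simps)
qed

lemma norm_diff_mult_ge:
  fixes a d \<gamma> :: "'a::real_normed_field"
  assumes "norm a \<le> norm d"
  shows "(max 1 (norm \<gamma>) - 1) * norm d \<le> norm (a - d * \<gamma>)"
proof (cases "norm \<gamma> \<le> 1")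
  case False
  have "norm d * norm \<gamma> - norm a \<le> norm (a - d * \<gamma>)"
    using norm_triangle_ineq2[of "d * \<gamma>" a] by (simp add: norm_mult norm_minus_commute)
  with False assms show ?thesis
    by (simp add: algebra_simps)
qed simp

lemma map_poly_bform_substitution_factored:
  fixes p :: "int poly" and \<alpha> :: "nat \<Rightarrow> 'a::field_char_0" and x y u v :: int
  assumes roots: "map_poly of_int p = Polynomial.smult c (\<Prod>i<n. [:- \<alpha> i, 1:])"
    and nz: "bform n p x y \<noteq> 0"
  shows "map_poly of_int (bform n p [:u, x:] [:v, y:])
    = Polynomial.smult (of_int (bform n p x y))
        (\<Prod>i<n. [:- substituted_root (\<alpha> i) (of_int x) (of_int y) (of_int u) (of_int v), 1:])"
proof -
  let ?L = "\<lambda>i. of_int x - \<alpha> i * of_int y"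
  let ?\<gamma> = "\<lambda>i. substituted_root (\<alpha> i) (of_int x) (of_int y) (of_int u) (of_int v)"
  have Fxy: "of_int (bform n p x y) = c * (\<Prod>i<n. ?L i)"
    by (simp only: bform_of_int bform_eq_prod_linear_factors[OF roots])
  have "poly (map_poly of_int (bform n p [:u, x:] [:v, y:])) t
      = poly (Polynomial.smult (of_int (bform n p x y)) (\<Prod>i<n. [:- ?\<gamma> i, 1:])) t" for t
  proof -
    have "poly (map_poly of_int (bform n p [:u, x:] [:v, y:])) t
        = bform n p (of_int x * t + of_int u * 1) (of_int y * t + of_int v * 1)"
      unfolding bform_def by (simp add: hom_distribs poly_sum poly_mult poly_power algebra_simps)
    also have "\<dots> = c * (\<Prod>i<n. ?L i * (t - ?\<gamma> i * 1))"
      unfolding bform_eq_prod_linear_factors[OF roots]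
      by (intro arg_cong[where f = "\<lambda>z. c * z"] prod.cong refl linear_form_substitution
          linear_factor_nonzero[OF roots nz]) simp
    also have "\<dots> = of_int (bform n p x y) * (\<Prod>i<n. t - ?\<gamma> i)"
      by (simp add: Fxy prod.distrib)
    finally show ?thesis
      by (simp add: poly_prod)
  qed
  then show ?thesis
    using poly_eq_poly_eq_iff by blast
qed

lemma bform_substitution:
  fixes p :: "int poly" and \<alpha> :: "nat \<Rightarrow> 'a::field_char_0" and x y u v X Y :: int
  assumes roots: "map_poly of_int p = Polynomial.smult c (\<Prod>i<n. [:- \<alpha> i, 1:])"
    and nz: "bform n p x y \<noteq> 0"
  shows "bform n (bform n p [:u, x:] [:v, y:]) X Y = bform n p (x * X + u * Y) (y * X + v * Y)"
proof -
  let ?L = "\<lambda>i. of_int x - \<alpha> i * of_int y"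
  let ?\<gamma> = "\<lambda>i. substituted_root (\<alpha> i) (of_int x) (of_int y) (of_int u) (of_int v)"
  have "(of_int (bform n (bform n p [:u, x:] [:v, y:]) X Y) :: 'a)
      = of_int (bform n p x y) * (\<Prod>i<n. of_int X - ?\<gamma> i * of_int Y)"
    by (simp only: bform_of_int
        bform_eq_prod_linear_factors[OF map_poly_bform_substitution_factored[OF roots nz]])
  also have "\<dots> = c * (\<Prod>i<n. ?L i * (of_int X - ?\<gamma> i * of_int Y))"
    by (simp add: bform_of_int bform_eq_prod_linear_factors[OF roots] prod.distrib)
  also have "\<dots> = of_int (bform n p (x * X + u * Y) (y * X + v * Y))"
    using linear_factor_nonzero[OF roots nz]
    by (simp add: bform_of_int bform_eq_prod_linear_factors[OF roots] linear_form_substitution)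
  finally show ?thesis
    by (simp only: of_int_eq_iff)
qed

lemma equiv_bform_substitution:
  fixes p :: "int poly" and \<alpha> :: "nat \<Rightarrow> 'a::field_char_0" and x y u v :: int
  assumes roots: "map_poly of_int p = Polynomial.smult c (\<Prod>i<n. [:- \<alpha> i, 1:])"
    and nz: "bform n p x y \<noteq> 0" and det: "\<bar>x * v - u * y\<bar> = 1"
  shows "equiv_bform n p (bform n p [:u, x:] [:v, y:])"
proof -
  have "degree (map_poly (of_int :: int \<Rightarrow> 'a) (bform n p [:u, x:] [:v, y:])) = n"
    using nz by (simp add: map_poly_bform_substitution_factored[OF roots nz] degree_prod_eq_sum_degree)
  then have "degree (bform n p [:u, x:] [:v, y:]) \<le> n"
    by (simp add: of_int_hom.degree_map_poly_hom)
  then show ?thesis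
    unfolding equiv_bform_def using det bform_substitution[OF roots nz]
    by (metis mult_1)
qed

lemma mahler_measure_le_of_reduced:
  fixes p :: "int poly" and \<alpha> :: "nat \<Rightarrow> complex" and x y u v :: int
  assumes roots: "map_poly of_int p = Polynomial.smult c (\<Prod>i<n. [:- \<alpha> i, 1:])"
    and red: "reduced_bform n A B p"
    and FA: "A \<le> \<bar>real_of_int (bform n p x y)\<bar>" and FB: "\<bar>real_of_int (bform n p x y)\<bar> \<le> B"
    and nz: "bform n p x y \<noteq> 0" and det: "\<bar>x * v - u * y\<bar> = 1"
  shows "mahler_measure p \<le> \<bar>real_of_int (bform n p x y)\<bar>
    * (\<Prod>i<n. max 1 (cmod (substituted_root (\<alpha> i) (of_int x) (of_int y) (of_int u) (of_int v))))"
proof -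
  let ?q = "bform n p [:u, x:] [:v, y:]"
  have "normalized_bform n A B ?q"
    unfolding normalized_bform_def using bform_substitution[OF roots nz, where X = 1 and Y = 0] FA FB by simp
  then have "mahler_measure p \<le> mahler_measure ?q"
    using red equiv_bform_substitution[OF roots nz det] unfolding reduced_bform_def by blast
  also have "mahler_measure ?q = cmod (of_int (bform n p x y))
    * (\<Prod>i<n. max 1 (cmod (substituted_root (\<alpha> i) (of_int x) (of_int y) (of_int u) (of_int v))))"
    unfolding mahler_measure_def map_poly_bform_substitution_factored[OF roots nz]
    by (rule mahler_measure_poly_smult_prod_linear_factors)
  finally show ?thesis
    by (simp only: norm_of_int)
qed

lemma primitive_vector_completion:
  fixes x y x0 y0 :: int
  defines "d \<equiv> x0 * y - x * y0"
  assumes "gcd x y = 1" and "d \<noteq> 0"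
  obtains u v a where "\<bar>x * v - u * y\<bar> = 1" and "\<bar>a\<bar> \<le> \<bar>d\<bar>"
    and "x0 = a * x + d * u" and "y0 = a * y + d * v"
proof -
  obtain s t where st: "s * x + t * y = 1"
    using bezout_int[of x y] assms(2) by auto
  \<comment> \<open>Shifting (u, v) by k (x, y) changes the coordinate a by - k d.\<close>
  define k where "k = (x0 * s + y0 * t) div d"
  define u where "u = t + k * x"
  define v where "v = k * y - s"
  define a where "a = y0 * u - x0 * v"
  have det: "u * y - x * v = 1"
    using st by (simp add: u_def v_def algebra_simps)
  have "a = (x0 * s + y0 * t) mod d"
    by (simp add: a_def u_def v_def k_def d_def minus_div_mult_eq_mod[symmetric] algebra_simps)
  then have "\<bar>a\<bar> \<le> \<bar>d\<bar>"
    using abs_mod_less[OF assms(3), of "x0 * s + y0 * t"] by linarith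
  moreover have "a * x + d * u = x0 * (u * y - x * v)" and "a * y + d * v = y0 * (u * y - x * v)"
    by (simp_all add: a_def d_def algebra_simps)
  moreover have "\<bar>x * v - u * y\<bar> = 1"
    using det by (metis abs_minus_commute abs_one)
  ultimately show ?thesis
    using det by (intro that[where u = u and v = v and a = a]) simp_all
qed

lemma linear_form_ratio_ge:
  fixes \<alpha> :: "'a::real_normed_field" and x y u v a d :: int
  assumes "of_int x - \<alpha> * of_int y \<noteq> 0" and "\<bar>a\<bar> \<le> \<bar>d\<bar>"
  shows "(max 1 (norm (substituted_root \<alpha> (of_int x) (of_int y) (of_int u) (of_int v))) - 1)
      * \<bar>d\<bar> \<le> norm ((of_int (a * x + d * u) - \<alpha> * of_int (a * y + d * v)) / (of_int x - \<alpha> * of_int y))"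
proof -
  let ?\<gamma> = "substituted_root \<alpha> (of_int x) (of_int y) (of_int u) (of_int v)"
  have "of_int (a * x + d * u) - \<alpha> * of_int (a * y + d * v)
      = (of_int x - \<alpha> * of_int y) * (of_int a - of_int d * ?\<gamma>)"
    using linear_form_substitution[OF assms(1), of "of_int a" "of_int u" "of_int d" "of_int v"]
    by (simp add: algebra_simps)
  then have "(of_int (a * x + d * u) - \<alpha> * of_int (a * y + d * v)) / (of_int x - \<alpha> * of_int y)
      = of_int a - of_int d * ?\<gamma>"
    using assms(1) by simp
  moreover have "norm (of_int a :: 'a) \<le> norm (of_int d :: 'a)"
    using assms(2) by simp
  ultimately show ?thesis
    using norm_diff_mult_ge[of "of_int a" "of_int d" ?\<gamma>] by simp
qed

lemma sum_truncated_exponents_ge: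
  fixes t :: "nat \<Rightarrow> real"
  assumes "1 \<le> n" and "\<And>i. i < n \<Longrightarrow> 0 \<le> t i" and "1 \<le> (\<Sum>i<n. t i)"
  shows "1 / 2 \<le> (\<Sum>i<n. if t i < 1 / (2 * real n) then 0 else min 1 (t i))"
proof (cases "\<exists>i<n. 1 \<le> t i")
  case True
  then obtain j where j: "j < n" "1 \<le> t j"
    by blast
  have "1 / (2 * real n) \<le> 1"
    using assms(1) by simp
  then have "\<not> t j < 1 / (2 * real n)"
    using j by linarith
  then have "1 \<le> (if t j < 1 / (2 * real n) then 0 else min 1 (t j))"
    using j by simp
  also have "\<dots> \<le> (\<Sum>i<n. if t i < 1 / (2 * real n) then 0 else min 1 (t i))"
    using j assms(2) by (intro member_le_sum) auto
  finally show ?thesis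
    by simp
next
  case False
  have "(\<Sum>i<n. t i) - 1 / 2 = (\<Sum>i<n. t i - 1 / (2 * real n))"
    using assms(1) by (simp add: sum_subtractf)
  also have "\<dots> \<le> (\<Sum>i<n. if t i < 1 / (2 * real n) then 0 else min 1 (t i))"
    using False by (intro sum_mono) (auto simp: not_le)
  finally show ?thesis
    using assms(3) by simp
qed

lemma exists_exponents_powr_le_prod:
  fixes Q :: real and g :: "nat \<Rightarrow> real"
  assumes "1 \<le> n" and "0 \<le> Q" and "Q \<le> (\<Prod>i<n. max 1 (g i))"
  shows "\<exists>\<psi>. (\<forall>i<n. \<psi> i = 0 \<or> (1 / (2 * real n) \<le> \<psi> i \<and> \<psi> i \<le> 1))
    \<and> 1 / 2 \<le> (\<Sum>i<n. \<psi> i) \<and> (\<forall>i<n. Q powr \<psi> i \<le> max 1 (g i))"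
proof (cases "Q \<le> 1")
  case True
  then show ?thesis
    using assms by (intro exI[of _ "\<lambda>_. 1"]) auto
next
  case False
  define t where "t i = ln (max 1 (g i)) / ln Q" for i
  define \<psi> where "\<psi> i = (if t i < 1 / (2 * real n) then 0 else min 1 (t i))" for i
  have "ln Q \<le> ln (\<Prod>i<n. max 1 (g i))"
    using False assms(3) by simp
  also have "\<dots> = (\<Sum>i<n. t i) * ln Q"
    using False by (simp add: t_def ln_prod sum_divide_distrib[symmetric])
  finally have "1 \<le> (\<Sum>i<n. t i)"
    using False by simp
  then have "1 / 2 \<le> (\<Sum>i<n. \<psi> i)"
    unfolding \<psi>_def using assms(1) False by (intro sum_truncated_exponents_ge) (auto simp: t_def)
  moreover have "Q powr \<psi> i \<le> max 1 (g i)" for i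
  proof (cases "\<psi> i = 0")
    case False
    then have "Q powr \<psi> i \<le> Q powr t i"
      using \<open>\<not> Q \<le> 1\<close> by (intro powr_mono) (auto simp: \<psi>_def split: if_splits)
    also have "\<dots> = max 1 (g i)"
      using \<open>\<not> Q \<le> 1\<close> by (simp add: t_def powr_def)
    finally show ?thesis .
  qed (use \<open>\<not> Q \<le> 1\<close> in simp)
  moreover have "1 / (2 * real n) \<le> 1"
    using assms(1) by simp
  ultimately show ?thesis
    by (intro exI[of _ \<psi>]) (auto simp: \<psi>_def)
qed

theorem lemma7p2:
  fixes n s :: nat and p :: "int poly" and \<alpha> :: "nat \<Rightarrow> complex"
    and h :: nat and A B :: real and x0 y0 x y :: int
  assumes n3: "n \<ge> 3" and s1: "s \<ge> 1"
    and classC: "class_C (4 * s - 2) n p"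
    and roots: "map_poly complex_of_int p = Polynomial.smult (of_int (bform n p 1 0)) (\<Prod>i<n. [:- \<alpha> i, 1:])"
    and hpos: "h > 0"
    and hbound: "real h < cmod (disc_roots n (of_int (bform n p 1 0)) \<alpha>) powr (1 / (4 * (real n - 1)))
                         / (10 ^ n * real n powr (real n / (4 * (real n - 1))))"
    and A0: "0 \<le> A" and AB: "A \<le> B" and Bh: "B \<le> real h" and Bsqrt: "B \<le> sqrt (real h) * A"
    and red: "reduced_bform n A B p"
    and prim0: "gcd x0 y0 = 1" and prim: "gcd x y = 1"
    and indep: "x0 * y - x * y0 \<noteq> 0"
    and F0: "A \<le> \<bar>real_of_int (bform n p x0 y0)\<bar>" "\<bar>real_of_int (bform n p x0 y0)\<bar> \<le> B"
    and F1: "A \<le> \<bar>real_of_int (bform n p x y)\<bar>" "\<bar>real_of_int (bform n p x y)\<bar> \<le> B"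
  shows "\<exists>\<psi> :: nat \<Rightarrow> real.
           (\<forall>i<n. \<psi> i = 0 \<or> (1 / (2 * real n) \<le> \<psi> i \<and> \<psi> i \<le> 1)) \<and>
           (\<Sum>i<n. \<psi> i) \<ge> 1 / 2 \<and>
           (\<forall>i<n. cmod ((of_int x0 - \<alpha> i * of_int y0) / (of_int x - \<alpha> i * of_int y))
              \<ge> ((mahler_measure p / real h) powr (\<psi> i) - 3 / 2 - real h powr (1 / (2 * real n)))
                 * real_of_int \<bar>x0 * y - x * y0\<bar>)"
proof -
  have "bform n p 1 0 \<noteq> (0::int)"
    using classC n3 unfolding class_C_def irreducible_bform_def by (auto simp: bform_1_0)
  then have Fxy: "bform n p x y \<noteq> 0"
    using F1(1) Bsqrt A0 red unfolding reduced_bform_def normalized_bform_def by force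
  define d where "d = x0 * y - x * y0"
  obtain u v a where det: "\<bar>x * v - u * y\<bar> = 1" and small: "\<bar>a\<bar> \<le> \<bar>d\<bar>"
    and x0: "x0 = a * x + d * u" and y0: "y0 = a * y + d * v"
    using primitive_vector_completion[OF prim indep] unfolding d_def by blast
  define \<gamma> where "\<gamma> i = substituted_root (\<alpha> i) (of_int x) (of_int y) (of_int u) (of_int v)" for i
  define Q where "Q = mahler_measure p / real h"
  have "mahler_measure p \<le> \<bar>real_of_int (bform n p x y)\<bar> * (\<Prod>i<n. max 1 (cmod (\<gamma> i)))"
    unfolding \<gamma>_def using mahler_measure_le_of_reduced[OF roots red F1 Fxy det] .
  also have "\<dots> \<le> real h * (\<Prod>i<n. max 1 (cmod (\<gamma> i)))"
    using F1(2) Bh by (intro mult_right_mono) (auto intro: prod_nonneg)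
  finally have Q_le: "Q \<le> (\<Prod>i<n. max 1 (cmod (\<gamma> i)))"
    unfolding Q_def using hpos by (simp add: divide_le_eq mult.commute)
  have Q_ge: "0 \<le> Q"
    unfolding Q_def by (simp add: mahler_measure_ge_0)
  obtain \<psi> where range: "\<forall>i<n. \<psi> i = 0 \<or> (1 / (2 * real n) \<le> \<psi> i \<and> \<psi> i \<le> 1)"
    and sum: "1 / 2 \<le> (\<Sum>i<n. \<psi> i)" and powr_le: "\<forall>i<n. Q powr \<psi> i \<le> max 1 (cmod (\<gamma> i))"
    using exists_exponents_powr_le_prod[OF _ Q_ge Q_le] n3 by auto
  have "(Q powr \<psi> i - 3 / 2 - real h powr (1 / (2 * real n))) * \<bar>d\<bar>
      \<le> cmod ((of_int x0 - \<alpha> i * of_int y0) / (of_int x - \<alpha> i * of_int y))" if "i < n" for i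
  proof -
    have "Q powr \<psi> i - 3 / 2 - real h powr (1 / (2 * real n)) \<le> max 1 (cmod (\<gamma> i)) - 1"
      using powr_le[rule_format, OF that] powr_ge_zero[of "real h" "1 / (2 * real n)"] by linarith
    then have "(Q powr \<psi> i - 3 / 2 - real h powr (1 / (2 * real n))) * \<bar>d\<bar>
        \<le> (max 1 (cmod (\<gamma> i)) - 1) * \<bar>d\<bar>"
      by (rule mult_right_mono) simp
    also have "\<dots> \<le> cmod ((of_int x0 - \<alpha> i * of_int y0) / (of_int x - \<alpha> i * of_int y))"
      unfolding \<gamma>_def x0 y0
      by (rule linear_form_ratio_ge[OF linear_factor_nonzero[OF roots Fxy that] small])
    finally show ?thesis .
  qed
  with range sum show ?thesis
    unfolding Q_def d_def by blast
qed

end
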